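(* Let $p$ be a complex polynomial of degree $d \geq 2$ such that $H_p = p^{-1}(H_p) = J_p$, where $H_p=\operatorname{conv}J_p$. Then $p$ is affinely conjugate to the Chebyshev polynomial $T_d$ or to $-T_d$; that is, there exist $a\in\mathbb{C}\setminus\{0\}$, $b\in\mathbb{C}$ such that, with $g(z)=az+b$, one has $g\circ p\circ g^{-1} = T_d$ or $g\circ p\circ g^{-1} = -T_d$.
   Context: For a polynomial $p$ viewed as a holomorphic self-map of the Riemann sphere $\widehat{\mathbb{C}}$ (with $p(\infty)=\infty$), the Fatou set $F_p$ is the maximal open subset of $\widehat{\mathbb{C}}$ on which the iterates $\{p^{\circ n}\}_{n\in\mathbb{N}}$ form an equicontinuous family, and the Julia set $J_p$ is the complement $\widehat{\mathbb{C}}\setminus F_p$. $\operatorname{conv} X$ denotes the convex hull of $X \subset \mathbb{C}\cong\mathbb{R}^2$. The Chebyshev polynomial $T_d$ of degree $d$ is the polynomial satisfying $T_d(\cos z)=\cos(dz)$ for all $z$. *)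

theory Defs
  imports "HOL-Analysis.Analysis" "HOL-Computational_Algebra.Polynomial"
begin

definition chordal_dist :: "complex \<Rightarrow> complex \<Rightarrow> real" where
  "chordal_dist z w = 2 * cmod (z - w) / (sqrt (1 + (cmod z)\<^sup>2) * sqrt (1 + (cmod w)\<^sup>2))"

definition iterates_equicontinuous_on :: "complex set \<Rightarrow> (complex \<Rightarrow> complex) \<Rightarrow> bool" where
  "iterates_equicontinuous_on U f \<longleftrightarrow>
     (\<forall>z0\<in>U. \<forall>\<epsilon>>0. \<exists>\<delta>>0. \<forall>n::nat. \<forall>z\<in>U.
        dist z z0 < \<delta> \<longrightarrow> chordal_dist ((f ^^ n) z) ((f ^^ n) z0) < \<epsilon>)"

definition fatou_set :: "complex poly \<Rightarrow> complex set" where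
  "fatou_set p = \<Union>{U. open U \<and> iterates_equicontinuous_on U (poly p)}"

text \<open>Julia set (a subset of the complex plane; infinity lies in the Fatou set for degree \<ge> 2).\<close>
definition julia_set :: "complex poly \<Rightarrow> complex set" where
  "julia_set p = UNIV - fatou_set p"

definition is_chebyshev :: "nat \<Rightarrow> (complex \<Rightarrow> complex) \<Rightarrow> bool" where
  "is_chebyshev d f \<longleftrightarrow> (\<exists>q. f = poly q) \<and> (\<forall>z. f (cos z) = cos (of_nat d * z))"

end

theory Submission
  imports
    Defs
    "HOL-Complex_Analysis.Complex_Analysis"
    "HOL-Computational_Algebra.Fundamental_Theorem_Algebra"
begin

text \<open>
  The Julia set \<open>J\<close> is compact and nonempty, and by hypothesis convex and totally invariant,
  \<open>p\<^sup>-\<^sup>1(J) = J\<close>. Its interior is a bounded forward invariant open set, hence lies in the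
  Fatou set, so \<open>J\<close> has empty interior and is a segment; it is not a point, because a
  totally invariant point is a superattracting fixed point. After an affine change of
  variables \<open>J = [-1,1]\<close> and the conjugate \<open>q\<close> satisfies \<open>q\<^sup>-\<^sup>1([-1,1]) = [-1,1]\<close>.
  Then \<open>q\<close> is real with \<open>\<bar>q\<bar> \<le> 1\<close> on \<open>[-1,1]\<close>, so every point where \<open>q = \<plusminus>1\<close> is \<open>\<plusminus>1\<close> or an
  interior extremum, i.e. a critical point of \<open>q\<close>. Counting multiplicities,
  \<open>1 - q\<^sup>2\<close> divides \<open>(1 - x\<^sup>2) q'\<^sup>2\<close>, and comparing degrees and leading coefficients gives
  \<open>(1 - x\<^sup>2) q'\<^sup>2 = d\<^sup>2 (1 - q\<^sup>2)\<close>. Differentiating yields Chebyshev's differential equation,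
  whose polynomial solutions are the multiples of \<open>T\<^sub>d\<close>, and \<open>q(1)\<^sup>2 = 1\<close> forces \<open>q = \<plusminus>T\<^sub>d\<close>.
\<close>

lemma poly_eq_0_if_vanishes_on_interval:
  fixes P :: "'a::real_normed_field poly"
  assumes "\<And>x::real. -1 \<le> x \<Longrightarrow> x \<le> 1 \<Longrightarrow> poly P (of_real x) = 0"
  shows "P = 0"
proof (rule ccontr)
  assume "P \<noteq> 0"
  then have "finite {x. poly P x = 0}" by (rule poly_roots_finite)
  moreover have "of_real ` {-1..1::real} \<subseteq> {x. poly P x = 0}" using assms by auto
  ultimately have "finite (of_real ` {-1..1::real} :: 'a set)"
    by (rule finite_subset[rotated])
  then have "finite {-1..1::real}"
    using finite_imageD inj_of_real inj_on_subset by blast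
  then show False using infinite_Icc[of "-1::real" 1] by simp
qed

lemma poly_map_poly_of_real:
  "poly (map_poly of_real p) (of_real x) = (of_real (poly p x) :: 'a::{real_algebra_1,comm_ring_1})"
  by (induction p) (auto simp: map_poly_pCons)

lemma pderiv_map_poly_of_real:
  "pderiv (map_poly of_real p) = (map_poly of_real (pderiv p) :: 'a::{real_algebra_1,idom} poly)"
  by (intro poly_eqI) (simp add: coeff_map_poly coeff_pderiv)

lemma Im_poly_of_real: "Im (poly p (of_real x)) = poly (map_poly Im p) x"
  by (induction p) (auto simp: map_poly_pCons)

lemma real_poly_if_real_on_interval:
  fixes q :: "complex poly"
  assumes "\<And>x::real. -1 \<le> x \<Longrightarrow> x \<le> 1 \<Longrightarrow> poly q (of_real x) \<in> \<real>"
  obtains r where "q = map_poly of_real r"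
proof
  have "map_poly Im q = 0"
    by (rule poly_eq_0_if_vanishes_on_interval)
       (use assms in \<open>auto simp: Im_poly_of_real complex_is_Real_iff\<close>)
  then show "q = map_poly of_real (map_poly Re q)"
    by (intro poly_eqI) (auto simp: coeff_map_poly complex_eq_iff poly_eq_iff)
qed

lemma dvd_if_order_le:
  fixes p q :: "complex poly"
  assumes "p \<noteq> 0" "\<And>a. order a p \<le> order a q"
  shows "p dvd q"
proof (cases "q = 0")
  case False
  have "proots p \<subseteq># proots q"
    using assms False by (simp add: subseteq_mset_def)
  then have "(\<Prod>x\<in>#proots p. [:-x, 1:]) dvd (\<Prod>x\<in>#proots q. [:-x, 1:])"
    by (intro prod_mset_subset_imp_dvd image_mset_subseteq_mono)
  then have "smult (lead_coeff p) (\<Prod>x\<in>#proots p. [:-x, 1:])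
      dvd smult (lead_coeff q) (\<Prod>x\<in>#proots q. [:-x, 1:])"
    using assms(1) False by (simp add: smult_dvd_iff dvd_smult_iff)
  then show ?thesis
    by (simp only: complex_poly_decompose_multiset)
qed simp

lemma degree_one_minus_square:
  fixes q :: "'a::idom poly"
  assumes "degree q \<ge> 1"
  shows "degree (1 - q\<^sup>2) = 2 * degree q" and "lead_coeff (1 - q\<^sup>2) = - (lead_coeff q)\<^sup>2"
proof -
  have q: "q \<noteq> 0" using assms by auto
  have "degree (1::'a poly) < degree (- (q\<^sup>2))"
    using assms q by (simp add: degree_power_eq)
  then have "degree (1 + - (q\<^sup>2)) = degree (- (q\<^sup>2))"
    "lead_coeff (1 + - (q\<^sup>2)) = lead_coeff (- (q\<^sup>2))"
    by (rule degree_add_eq_right, rule lead_coeff_add_le)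
  then show "degree (1 - q\<^sup>2) = 2 * degree q" "lead_coeff (1 - q\<^sup>2) = - (lead_coeff q)\<^sup>2"
    using q lead_coeff_power[of q 2] by (simp_all add: lead_coeff_minus degree_power_eq)
qed

section \<open>Chebyshev polynomials and their differential equation\<close>

fun cheb :: "nat \<Rightarrow> complex poly" where
  "cheb 0 = 1"
| "cheb (Suc 0) = [:0, 1:]"
| "cheb (Suc (Suc n)) = [:0, 2:] * cheb (Suc n) - cheb n"

lemma poly_cheb_cos: "poly (cheb n) (cos z) = cos (of_nat n * z)"
proof (induction n rule: cheb.induct)
  case (3 n)
  have "cos (of_nat (Suc (Suc n)) * z) = 2 * cos z * cos (of_nat (Suc n) * z) - cos (of_nat n * z)"
    using cos_add[of "of_nat (Suc n) * z" z] cos_diff[of "of_nat (Suc n) * z" z]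
    by (simp add: algebra_simps)
  with 3 show ?case by simp
qed simp_all

lemma poly_cheb_1 [simp]: "poly (cheb n) 1 = 1"
  using poly_cheb_cos[of n 0] by simp

lemma cheb_nonzero: "cheb n \<noteq> 0"
  by (metis poly_0 poly_cheb_1 zero_neq_one)

lemma is_chebyshev_cheb: "is_chebyshev d (poly (cheb d))"
  by (auto simp: is_chebyshev_def poly_cheb_cos)

definition cheb_ode :: "nat \<Rightarrow> complex poly \<Rightarrow> complex poly" where
  "cheb_ode d P = [:1, 0, -1:] * pderiv (pderiv P) - [:0, 1:] * pderiv P + smult (of_nat (d\<^sup>2)) P"

lemma coeff_cheb_ode:
  "coeff (cheb_ode d P) k =
     (of_nat (d\<^sup>2) - of_nat (k\<^sup>2)) * coeff P k + of_nat ((k + 2) * (k + 1)) * coeff P (k + 2)"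
proof -
  have "[:1, 0, -1:] * X = X - pCons 0 (pCons 0 X)" for X :: "complex poly"
    by (simp add: algebra_simps)
  then show ?thesis
    unfolding cheb_ode_def
    by (cases k; cases "k - 1")
       (auto simp: coeff_pderiv coeff_pCons algebra_simps power2_eq_square split: nat.splits)
qed

lemma cheb_ode_diff_smult: "cheb_ode d (P - smult c Q) = cheb_ode d P - smult c (cheb_ode d Q)"
  unfolding cheb_ode_def pderiv_diff pderiv_smult
  by (simp add: smult_diff_right smult_add_right mult_smult_right smult_smult algebra_simps mult.commute)

lemma degree_eq_if_cheb_ode_eq_0:
  assumes "cheb_ode d P = 0" "P \<noteq> 0"
  shows "degree P = d"
proof -
  have "coeff (cheb_ode d P) (degree P) = (of_nat (d\<^sup>2) - of_nat ((degree P)\<^sup>2)) * lead_coeff P"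
    by (simp add: coeff_cheb_ode coeff_eq_0)
  with assms have "(of_nat (d\<^sup>2) :: complex) = of_nat ((degree P)\<^sup>2)"
    by simp
  then have "d\<^sup>2 = (degree P)\<^sup>2"
    by (simp only: of_nat_eq_iff)
  then show ?thesis
    using power_eq_iff_eq_base[of 2 d "degree P"] by simp
qed

lemma cheb_ode_solutions_proportional:
  assumes "cheb_ode d P = 0" "cheb_ode d Q = 0" "Q \<noteq> 0"
  shows "\<exists>c. P = smult c Q"
proof (cases "P = 0")
  case False
  define c where "c = lead_coeff P / lead_coeff Q"
  have deg: "degree P = d" "degree Q = d"
    using degree_eq_if_cheb_ode_eq_0 assms False by auto
  have "cheb_ode d (P - smult c Q) = 0"
    using assms by (simp add: cheb_ode_diff_smult)
  moreover have "coeff Q d \<noteq> 0"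
    using deg assms(3) by (metis leading_coeff_0_iff)
  then have "coeff (P - smult c Q) d = 0"
    using deg by (simp add: c_def)
  ultimately have "P - smult c Q = 0"
    using degree_eq_if_cheb_ode_eq_0 leading_coeff_0_iff by blast
  then show ?thesis by auto
qed (auto intro: exI[of _ 0])

lemma cheb_ode_cheb: "cheb_ode d (cheb d) = 0"
proof (rule poly_eq_0_if_vanishes_on_interval)
  have D1: "poly (pderiv (cheb d)) (cos z) * sin z = of_nat d * sin (of_nat d * z)" for z
  proof -
    have "((\<lambda>z. poly (cheb d) (cos z)) has_field_derivative poly (pderiv (cheb d)) (cos z) * - sin z) (at z)"
      by (auto intro!: derivative_eq_intros)
    moreover have "((\<lambda>z. cos (of_nat d * z)) has_field_derivative - sin (of_nat d * z) * of_nat d) (at z)"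
      by (auto intro!: derivative_eq_intros)
    ultimately show ?thesis
      unfolding poly_cheb_cos by (auto dest: DERIV_unique)
  qed
  have D2: "poly (pderiv (pderiv (cheb d))) (cos z) * - sin z * sin z + poly (pderiv (cheb d)) (cos z) * cos z
     = of_nat d * (cos (of_nat d * z) * of_nat d)" for z
  proof -
    have "((\<lambda>z. poly (pderiv (cheb d)) (cos z) * sin z) has_field_derivative
       poly (pderiv (pderiv (cheb d))) (cos z) * - sin z * sin z + poly (pderiv (cheb d)) (cos z) * cos z) (at z)"
      by (auto intro!: derivative_eq_intros)
    moreover have "((\<lambda>z. of_nat d * sin (of_nat d * z)) has_field_derivative
        of_nat d * (cos (of_nat d * z) * of_nat d)) (at z)"
      by (auto intro!: derivative_eq_intros)
    ultimately show ?thesis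
      unfolding D1 by (auto dest: DERIV_unique)
  qed
  fix x :: real
  assume "-1 \<le> x" "x \<le> 1"
  then obtain z :: complex where z: "of_real x = cos z"
    by (metis cos_arccos cos_of_real)
  have "poly (cheb_ode d (cheb d)) (cos z) =
      (1 - cos z ^ 2) * poly (pderiv (pderiv (cheb d))) (cos z)
      - cos z * poly (pderiv (cheb d)) (cos z) + of_nat d ^ 2 * poly (cheb d) (cos z)"
    by (simp add: cheb_ode_def algebra_simps power2_eq_square)
  also have "\<dots> = 0"
    using D2[of z] unfolding sin_squared_eq[symmetric] poly_cheb_cos
    by (simp add: algebra_simps power2_eq_square)
  finally show "poly (cheb_ode d (cheb d)) (of_real x) = 0"
    unfolding z .
qed

section \<open>Polynomials with the interval as preimage of itself\<close>

lemma poly_pderiv_eq_0_if_extremal: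
  fixes r :: "real poly"
  assumes bound: "\<And>y. -1 \<le> y \<Longrightarrow> y \<le> 1 \<Longrightarrow> \<bar>poly r y\<bar> \<le> 1"
    and "-1 < x" "x < 1" "\<bar>poly r x\<bar> = 1"
  shows "poly (pderiv r) x = 0"
proof -
  define e where "e = min (1 - x) (1 + x)"
  have e: "0 < e" using assms by (simp add: e_def)
  have near: "\<forall>y. \<bar>x - y\<bar> < e \<longrightarrow> \<bar>poly r y\<bar> \<le> 1"
    by (intro allI impI bound) (auto simp: e_def abs_less_iff)
  consider "poly r x = 1" | "poly r x = -1"
    using assms(4) by linarith
  then show ?thesis
  proof cases
    case 1
    with near show ?thesis by (intro DERIV_local_max[OF poly_DERIV e]) (auto simp: abs_le_iff)
  next
    case 2
    with near show ?thesis by (intro DERIV_local_min[OF poly_DERIV e]) (auto simp: abs_le_iff)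
  qed
qed

lemma closed_segment_minus_one_one: "closed_segment (-1) (1::complex) = of_real ` {-1..1}"
  using closed_segment_of_real[of "-1" 1] by (simp add: closed_segment_eq_real_ivl)

lemma critical_point_if_vimage_interval:
  fixes q :: "complex poly"
  assumes H: "\<And>z. poly q z \<in> closed_segment (-1) 1 \<longleftrightarrow> z \<in> closed_segment (-1) 1"
    and a: "poly q a = 1 \<or> poly q a = -1"
  shows "poly (pderiv q) a = 0 \<or> poly [:1, 0, -1:] a = 0"
proof -
  have q_interval: "poly q (of_real x) \<in> of_real ` {-1..1}" if "-1 \<le> x" "x \<le> 1" for x
    using H[of "of_real x"] that by (auto simp: closed_segment_minus_one_one)
  have "poly q (of_real x) \<in> \<real>" if "-1 \<le> x" "x \<le> 1" for x
    using q_interval[OF that] by auto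
  then obtain r where r: "q = map_poly of_real r"
    by (rule real_poly_if_real_on_interval)
  have bound: "\<bar>poly r y\<bar> \<le> 1" if "-1 \<le> y" "y \<le> 1" for y
    using q_interval[OF that] by (auto simp: r poly_map_poly_of_real)
  have "a \<in> closed_segment (-1) 1"
    using H[of a] a by auto
  then obtain x where x: "a = of_real x" "-1 \<le> x" "x \<le> 1"
    by (auto simp: closed_segment_minus_one_one)
  show ?thesis
  proof (cases "x = 1 \<or> x = -1")
    case False
    have "of_real (poly r x) = (1::complex) \<or> of_real (poly r x) = (-1::complex)"
      using a by (simp add: r x poly_map_poly_of_real)
    then have "\<bar>poly r x\<bar> = 1"
      by (auto simp: complex_eq_iff)
    then have "poly (pderiv r) x = 0"
      using False x by (intro poly_pderiv_eq_0_if_extremal[OF bound]) auto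
    then show ?thesis
      by (simp add: r x pderiv_map_poly_of_real poly_map_poly_of_real)
  qed (auto simp: x power2_eq_square)
qed

lemma order_one_minus_square_le:
  fixes q :: "complex poly"
  assumes "degree q \<ge> 1"
    and crit: "poly q a = 1 \<or> poly q a = -1 \<Longrightarrow> poly (pderiv q) a = 0 \<or> poly [:1, 0, -1:] a = 0"
  shows "order a (1 - q\<^sup>2) \<le> order a ([:1, 0, -1:] * (pderiv q)\<^sup>2)"
proof (cases "poly q a = 1 \<or> poly q a = -1")
  case False
  then have "poly (1 - q\<^sup>2) a \<noteq> 0"
    by (simp add: power2_eq_square) (metis square_eq_1_iff)
  then show ?thesis by (simp add: order_0I)
next
  case True
  define s where "s = poly q a"
  have nonconst: "q + [:c:] \<noteq> 0" for c
    using assms(1) eq_neg_iff_add_eq_0[of q "[:c:]"] by auto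
  have "poly (1 - q\<^sup>2) x = poly (- ((q + [:-s:]) * (q + [:s:]))) x" for x
    using True by (auto simp: s_def algebra_simps power2_eq_square)
  then have factor: "1 - q\<^sup>2 = - ((q + [:-s:]) * (q + [:s:]))"
    by (simp add: poly_eq_poly_eq_iff[symmetric] fun_eq_iff)
  have q': "pderiv q \<noteq> 0"
    using assms(1) by (simp add: pderiv_eq_0_iff)
  define k where "k = order a (pderiv q)"
  have "order a (q + [:-s:]) = Suc k"
    using order_pderiv[of "q + [:-s:]" a] nonconst[of "-s"] by (simp add: k_def s_def pderiv_add)
  moreover have "order a (q + [:s:]) = 0"
    using True by (intro order_0I) (auto simp: s_def)
  ultimately have "order a (1 - q\<^sup>2) = Suc k"
    using nonconst by (simp add: factor order_mult)
  moreover have "order a ([:1, 0, -1:] * (pderiv q)\<^sup>2) = order a [:1, 0, -1:] + 2 * k"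
    using q' by (simp add: order_mult power2_eq_square k_def del: mult_pCons_left)
  moreover have "order a [:1, 0, -1:] \<noteq> 0" if "k = 0"
  proof -
    have "poly (pderiv q) a \<noteq> 0"
      using that q' order_root unfolding k_def by blast
    with crit True have "poly [:1, 0, -1:] a = 0" by blast
    then show ?thesis by (metis order_root pCons_eq_0_iff zero_neq_one)
  qed
  ultimately show ?thesis by linarith
qed

(* The identity below is the polynomial Pell equation q\<^sup>2 - (x\<^sup>2 - 1) (q'/d)\<^sup>2 = 1. *)
lemma pell_identity_if_dvd:
  fixes q :: "complex poly"
  assumes "degree q = d" "d \<ge> 1"
    and "1 - q\<^sup>2 dvd [:1, 0, -1:] * (pderiv q)\<^sup>2"
  shows "[:1, 0, -1:] * (pderiv q)\<^sup>2 = smult (of_nat (d\<^sup>2)) (1 - q\<^sup>2)"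
proof -
  define P where "P = 1 - q\<^sup>2"
  define Q where "Q = [:1, 0, -1:] * (pderiv q)\<^sup>2"
  have q': "pderiv q \<noteq> 0" "degree (pderiv q) = d - 1" "lead_coeff (pderiv q) = of_nat d * lead_coeff q"
    using assms by (auto simp: pderiv_eq_0_iff degree_pderiv coeff_pderiv)
  have P: "degree P = 2 * d" "lead_coeff P = - (lead_coeff q)\<^sup>2"
    using degree_one_minus_square[of q] assms by (simp_all add: P_def)
  have Q: "Q \<noteq> 0" "degree Q = 2 * d" "lead_coeff Q = - (of_nat d * lead_coeff q)\<^sup>2"
    using q' assms(2) lead_coeff_mult[of "[:1, 0, -1:]" "(pderiv q)\<^sup>2"] lead_coeff_power[of "pderiv q" 2]
    by (auto simp: Q_def degree_mult_eq degree_power_eq power_mult_distrib simp del: mult_pCons_left)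
  obtain h where h: "Q = P * h"
    using assms(3) by (auto simp: P_def Q_def)
  with Q have "h \<noteq> 0" by auto
  with h P Q have "degree h = 0"
    by (auto simp: degree_mult_eq)
  then obtain c where c: "h = [:c:]"
    by (auto elim: degree_eq_zeroE)
  have "lead_coeff Q = c * lead_coeff P"
    by (simp add: h c)
  moreover have "lead_coeff q \<noteq> 0"
    using assms by auto
  ultimately have "c = of_nat (d\<^sup>2)"
    using P Q by (simp add: power_mult_distrib)
  with h c show ?thesis
    by (simp add: P_def Q_def)
qed

lemma pderiv_pell_identity:
  "pderiv ([:1, 0, -1:] * (pderiv q)\<^sup>2 - smult (of_nat (d\<^sup>2)) (1 - q\<^sup>2))
     = smult 2 (pderiv q * cheb_ode d q)"
proof -
  have L': "pderiv [:1, 0, -1:] = [:0, -2 :: complex:]"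
    by (simp add: pderiv_pCons)
  show ?thesis
    unfolding cheb_ode_def power2_eq_square pderiv_mult pderiv_diff pderiv_smult pderiv_1 L'
    by (subst poly_eq_poly_eq_iff[symmetric], rule ext) (simp add: algebra_simps)
qed

theorem eq_cheb_if_vimage_interval:
  fixes q :: "complex poly"
  assumes "degree q = d" "d \<ge> 1"
    and H: "\<And>z. poly q z \<in> closed_segment (-1) 1 \<longleftrightarrow> z \<in> closed_segment (-1) 1"
  shows "q = cheb d \<or> q = - cheb d"
proof -
  have "1 - q\<^sup>2 \<noteq> 0"
    using degree_one_minus_square[of q] assms by auto
  then have "1 - q\<^sup>2 dvd [:1, 0, -1:] * (pderiv q)\<^sup>2"
    using assms critical_point_if_vimage_interval[OF H]
    by (intro dvd_if_order_le order_one_minus_square_le) auto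
  then have pell: "[:1, 0, -1:] * (pderiv q)\<^sup>2 = smult (of_nat (d\<^sup>2)) (1 - q\<^sup>2)"
    by (rule pell_identity_if_dvd[OF assms(1,2)])
  moreover have "pderiv q \<noteq> 0"
    using assms by (simp add: pderiv_eq_0_iff)
  ultimately have "cheb_ode d q = 0"
    using pderiv_pell_identity[of q d] by simp
  then obtain c where c: "q = smult c (cheb d)"
    using cheb_ode_solutions_proportional cheb_ode_cheb cheb_nonzero by blast
  have "poly ([:1, 0, -1:] * (pderiv q)\<^sup>2) 1 = 0"
    by simp
  then have "poly (smult (of_nat (d\<^sup>2)) (1 - q\<^sup>2)) 1 = 0"
    by (simp only: pell)
  then have "c\<^sup>2 = 1"
    using assms(2) by (simp add: c)
  then show ?thesis
    by (auto simp: c power2_eq_1_iff)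
qed

section \<open>The chordal metric and the Fatou set\<close>

lemma chordal_dist_le: "chordal_dist z w \<le> 2 * cmod (z - w)"
proof -
  have "1 \<le> sqrt (1 + (cmod z)\<^sup>2)" "1 \<le> sqrt (1 + (cmod w)\<^sup>2)"
    by simp_all
  then have "1 \<le> sqrt (1 + (cmod z)\<^sup>2) * sqrt (1 + (cmod w)\<^sup>2)"
    using mult_mono[of 1 _ 1] by fastforce
  then show ?thesis
    unfolding chordal_dist_def by (simp add: divide_le_eq mult_le_cancel_left1)
qed

lemma chordal_dist_inverse:
  assumes "z \<noteq> 0" "w \<noteq> 0"
  shows "chordal_dist (1 / z) (1 / w) = chordal_dist z w"
proof -
  have sqrt_inv: "sqrt (1 + (1 / x)\<^sup>2) = sqrt (1 + x\<^sup>2) / x" if "x > 0" for x :: real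
  proof -
    have "1 + (1 / x)\<^sup>2 = (1 + x\<^sup>2) / x\<^sup>2"
      using that by (simp add: field_simps power2_eq_square)
    then show ?thesis
      using that by (simp add: real_sqrt_divide)
  qed
  have "1 / z - 1 / w = (w - z) / (z * w)"
    using assms by (simp add: field_simps)
  then have diff: "cmod (1 / z - 1 / w) = cmod (z - w) / (cmod z * cmod w)"
    by (simp add: norm_divide norm_mult norm_minus_commute)
  have inv: "cmod (1 / z) = 1 / cmod z" "cmod (1 / w) = 1 / cmod w"
    by (simp_all add: norm_divide)
  have "cmod z > 0" "cmod w > 0"
    using assms by simp_all
  then show ?thesis
    unfolding chordal_dist_def diff inv sqrt_inv[OF \<open>cmod z > 0\<close>] sqrt_inv[OF \<open>cmod w > 0\<close>]
    by (simp add: field_simps)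
qed

lemma chordal_dist_ge:
  assumes "R \<ge> 0" "cmod y \<le> R" "cmod x \<ge> 2 * R + 1"
  shows "chordal_dist x y \<ge> 1 / (1 + R)"
proof -
  define D where "D = sqrt (1 + (cmod x)\<^sup>2) * sqrt (1 + (cmod y)\<^sup>2)"
  have "sqrt (1 + (cmod x)\<^sup>2) \<le> 1 + cmod x"
    by (rule real_le_lsqrt) (auto simp: power2_eq_square algebra_simps)
  moreover have "sqrt (1 + (cmod y)\<^sup>2) \<le> 1 + R"
    using assms mult_mono[of "cmod y" R "cmod y" R]
    by (intro real_le_lsqrt) (auto simp: power2_eq_square algebra_simps)
  ultimately have "D \<le> (1 + cmod x) * (1 + R)"
    unfolding D_def by (intro mult_mono) auto
  moreover have "D > 0"
    unfolding D_def by (intro mult_pos_pos real_sqrt_gt_zero) (auto intro: add_pos_nonneg)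
  ultimately have "1 / (1 + R) \<le> (1 + cmod x) / D"
    using assms(1) by (simp add: field_simps)
  also have "\<dots> \<le> 2 * cmod (x - y) / D"
    using \<open>D > 0\<close> norm_triangle_ineq2[of x y] assms by (intro divide_right_mono) auto
  finally show ?thesis
    by (simp add: chordal_dist_def D_def)
qed

lemma holomorphic_on_funpow_poly: "(poly p ^^ n) holomorphic_on S"
  by (induction n) (auto intro!: holomorphic_intros simp: o_def)

lemma fatou_set_open: "open (fatou_set p)"
  unfolding fatou_set_def by (intro open_Union) blast

lemma julia_set_closed: "closed (julia_set p)"
  unfolding julia_set_def using fatou_set_open by (simp add: closed_def Diff_Diff_Int)

lemma bounded_holomorphic_family_lipschitz:
  assumes "open U" "z0 \<in> U"
    and hol: "\<And>n. h n holomorphic_on U"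
    and bound: "\<And>n z. z \<in> U \<Longrightarrow> cmod (h n z) \<le> M"
  shows "\<exists>r>0. \<exists>B>0. \<forall>n. \<forall>z\<in>ball z0 r. cmod (h n z - h n z0) \<le> B * cmod (z - z0)"
proof -
  obtain r0 where "r0 > 0" "cball z0 r0 \<subseteq> U"
    using assms(1,2) open_contains_cball by blast
  define r where "r = r0 / 2"
  have r: "r > 0" "cball z0 (2 * r) \<subseteq> U"
    using \<open>r0 > 0\<close> \<open>cball z0 r0 \<subseteq> U\<close> by (auto simp: r_def)
  have "M \<ge> 0"
    using bound[OF assms(2)] norm_ge_zero order_trans by blast
  define B where "B = (M + 1) / r"
  have "B > 0"
    using \<open>M \<ge> 0\<close> r by (simp add: B_def)
  moreover have lip: "cmod (h n z - h n z0) \<le> B * cmod (z - z0)" if "z \<in> ball z0 r" for n z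
  proof (rule field_differentiable_bound[of "ball z0 r" _ "deriv (h n)"])
    fix w assume w: "w \<in> ball z0 r"
    have "cball w r \<subseteq> cball z0 (2 * r)"
    proof
      fix v assume "v \<in> cball w r"
      then show "v \<in> cball z0 (2 * r)"
        using w dist_triangle[of z0 v w] by auto
    qed
    with r(2) have sub: "cball w r \<subseteq> U"
      by blast
    have "(h n has_field_derivative deriv (h n) w) (at w)"
      using hol[of n] assms(1) sub r(1) by (meson centre_in_cball holomorphic_derivI less_imp_le subsetD)
    then show "(h n has_field_derivative deriv (h n) w) (at w within ball z0 r)"
      by (rule has_field_derivative_at_within)
    have "cmod ((deriv ^^ 1) (h n) w) \<le> fact 1 * (M + 1) / r ^ 1"
    proof (rule Cauchy_higher_deriv_bound[where y = 0])
      show "h n holomorphic_on ball w r"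
        using hol[of n] sub ball_subset_cball holomorphic_on_subset by blast
      show "continuous_on (cball w r) (h n)"
        using hol[of n] sub holomorphic_on_imp_continuous_on holomorphic_on_subset by blast
      show "h n v \<in> ball 0 (M + 1)" if "v \<in> ball w r" for v
        using bound[of v n] that sub ball_subset_cball by fastforce
    qed (use r in auto)
    then show "cmod (deriv (h n) w) \<le> B"
      by (simp add: B_def)
  qed (use that r in auto)
  ultimately show ?thesis
    using r(1) by blast
qed

lemma subset_fatou_setI:
  assumes "open U"
    and hol: "\<And>n. h n holomorphic_on U"
    and bound: "\<And>n z. z \<in> U \<Longrightarrow> cmod (h n z) \<le> M"
    and chordal: "\<And>n z w. z \<in> U \<Longrightarrow> w \<in> U \<Longrightarrow>
       chordal_dist ((poly p ^^ n) z) ((poly p ^^ n) w) \<le> 2 * cmod (h n z - h n w)"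
  shows "U \<subseteq> fatou_set p"
proof -
  have "iterates_equicontinuous_on U (poly p)"
    unfolding iterates_equicontinuous_on_def
  proof (intro ballI allI impI)
    fix z0 :: complex and \<epsilon> :: real
    assume "z0 \<in> U" "\<epsilon> > 0"
    obtain r B where r: "r > 0" "B > 0"
      and lip: "\<forall>n. \<forall>z\<in>ball z0 r. cmod (h n z - h n z0) \<le> B * cmod (z - z0)"
      using bounded_holomorphic_family_lipschitz[where h = h, OF assms(1) \<open>z0 \<in> U\<close> hol bound]
      by auto
    define \<delta> where "\<delta> = min r (\<epsilon> / (2 * B + 1))"
    have "\<delta> > 0"
      using r \<open>\<epsilon> > 0\<close> by (simp add: \<delta>_def)
    moreover have "chordal_dist ((poly p ^^ n) z) ((poly p ^^ n) z0) < \<epsilon>"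
      if "z \<in> U" "dist z z0 < \<delta>" for n z
    proof -
      have z: "z \<in> ball z0 r" "cmod (z - z0) < \<epsilon> / (2 * B + 1)"
        using that by (auto simp: \<delta>_def dist_commute dist_norm norm_minus_commute)
      have "chordal_dist ((poly p ^^ n) z) ((poly p ^^ n) z0) \<le> 2 * cmod (h n z - h n z0)"
        by (rule chordal[OF that(1) \<open>z0 \<in> U\<close>])
      also have "\<dots> \<le> 2 * B * cmod (z - z0)"
        using lip z(1) by simp
      also have "\<dots> \<le> 2 * B * (\<epsilon> / (2 * B + 1))"
        using z(2) r by (intro mult_left_mono) auto
      also have "\<dots> < \<epsilon>"
        using r \<open>\<epsilon> > 0\<close> by (simp add: field_simps)
      finally show ?thesis .
    qed
    ultimately show "\<exists>\<delta>>0. \<forall>n. \<forall>z\<in>U. dist z z0 < \<delta> \<longrightarrow>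
        chordal_dist ((poly p ^^ n) z) ((poly p ^^ n) z0) < \<epsilon>"
      by blast
  qed
  with assms(1) show ?thesis
    unfolding fatou_set_def by blast
qed

lemma bounded_orbits_subset_fatou_set:
  assumes "open U" "\<And>n z. z \<in> U \<Longrightarrow> cmod ((poly p ^^ n) z) \<le> M"
  shows "U \<subseteq> fatou_set p"
  by (rule subset_fatou_setI[where h = "\<lambda>n. poly p ^^ n"])
     (use assms in \<open>auto intro: holomorphic_on_funpow_poly chordal_dist_le\<close>)

lemma interior_subset_fatou_set_if_invariant:
  assumes "\<And>z. z \<in> K \<Longrightarrow> poly p z \<in> K" "K \<subseteq> cball 0 R"
  shows "interior K \<subseteq> fatou_set p"
proof (rule bounded_orbits_subset_fatou_set)
  fix n z assume "z \<in> interior K"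
  then have "(poly p ^^ n) z \<in> K"
    using interior_subset assms(1) by (induction n) auto
  with assms(2) show "cmod ((poly p ^^ n) z) \<le> R"
    by auto
qed simp

lemma double_root_if_unique_preimage:
  fixes p :: "complex poly"
  assumes "degree p \<ge> 2" and pre: "\<And>z. poly p z = c \<longleftrightarrow> z = c"
  obtains t where "\<And>z. poly p z = c + (z - c)\<^sup>2 * poly t z"
proof -
  have "poly (p - [:c:]) c = 0"
    using pre by simp
  then obtain s where s: "p - [:c:] = [:-c, 1:] * s"
    by (metis dvdE poly_eq_0_iff_dvd)
  have "p - [:c:] = p + [:-c:]"
    by (simp add: diff_conv_add_uminus)
  then have deg: "degree (p - [:c:]) = degree p"
    using assms(1) by (simp only:) (intro degree_add_eq_left, simp)
  with s assms(1) have "s \<noteq> 0"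
    by auto
  then have "degree (p - [:c:]) = Suc (degree s)"
    unfolding s by (subst degree_mult_eq) auto
  with deg assms(1) have "degree s \<ge> 1"
    by simp
  then obtain z where z: "poly s z = 0"
    using alg_closed_imp_poly_has_root[of s] by force
  then have "poly (p - [:c:]) z = 0"
    by (simp add: s)
  with pre z have "poly s c = 0"
    by simp
  then obtain t where t: "s = [:-c, 1:] * t"
    by (metis dvdE poly_eq_0_iff_dvd)
  have "poly p z - c = (z - c) * ((z - c) * poly t z)" for z
    using arg_cong[OF s, of "\<lambda>q. poly q z"] by (simp add: t algebra_simps)
  then show ?thesis
    by (intro that[of t]) (simp add: power2_eq_square algebra_simps)
qed

lemma superattracting_fixed_point_in_fatou_set:
  assumes pt: "\<And>z. poly p z = c + (z - c)\<^sup>2 * poly t z"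
  shows "c \<in> fatou_set p"
proof -
  have "compact (poly t ` cball c 1)"
    by (intro compact_continuous_image) (auto intro: continuous_intros)
  then obtain M where M: "M > 0" "\<And>x. x \<in> cball c 1 \<Longrightarrow> cmod (poly t x) \<le> M"
    using compact_imp_bounded bounded_pos by (metis imageI)
  define r where "r = 1 / (2 * (M + 1))"
  have r: "r > 0" "r \<le> 1" "r * M \<le> 1 / 2"
    using M by (auto simp: r_def field_simps)
  have invariant: "poly p z \<in> ball c r" if "z \<in> ball c r" for z
  proof -
    have zc: "cmod (z - c) < r"
      using that by (simp add: dist_norm norm_minus_commute)
    then have "cmod (poly t z) \<le> M"
      using M(2)[of z] r by (simp add: dist_norm norm_minus_commute)
    have "cmod (poly p z - c) = cmod (z - c) * (cmod (z - c) * cmod (poly t z))"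
      by (simp add: pt norm_mult power2_eq_square)
    also have "\<dots> \<le> cmod (z - c) * (r * M)"
      using zc \<open>cmod (poly t z) \<le> M\<close> r by (intro mult_left_mono mult_mono) auto
    also have "\<dots> \<le> cmod (z - c) * (1 / 2)"
      using r by (intro mult_left_mono) auto
    also have "\<dots> < r"
      using zc r by simp
    finally show ?thesis
      by (simp add: dist_norm norm_minus_commute)
  qed
  have "ball c r \<subseteq> fatou_set p"
  proof (rule bounded_orbits_subset_fatou_set[where M = "cmod c + r"])
    fix n z assume "z \<in> ball c r"
    then have "(poly p ^^ n) z \<in> ball c r"
      using invariant by (induction n) auto
    then show "cmod ((poly p ^^ n) z) \<le> cmod c + r"
      using norm_triangle_sub[of "(poly p ^^ n) z" c] by (simp add: dist_norm norm_minus_commute)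
  qed simp
  then show ?thesis
    using r by auto
qed

section \<open>Escape radius and the Julia set\<close>

definition escape_radius :: "complex poly \<Rightarrow> real \<Rightarrow> bool" where
  "escape_radius p R \<longleftrightarrow> R \<ge> 1 \<and> (\<forall>z. R \<le> cmod z \<longrightarrow> 2 * cmod z \<le> cmod (poly p z))"

lemma escape_radius_exists:
  assumes "degree p \<ge> 2"
  obtains R where "escape_radius p R"
proof -
  obtain a p1 where p: "p = pCons a p1"
    by (cases p) auto
  obtain b p2 where p1: "p1 = pCons b p2"
    by (cases p1) auto
  have "p2 \<noteq> 0"
    using assms by (auto simp: p p1 split: if_splits)
  then obtain r where r: "\<forall>z. r \<le> cmod z \<longrightarrow> 2 + cmod a \<le> cmod (poly p1 z)"
    using poly_infinity[of p2 "2 + cmod a" b] by (auto simp: p1)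
  have "2 * cmod z \<le> cmod (poly p z)" if "max r 1 \<le> cmod z" for z
  proof -
    have "cmod z * (2 + cmod a) - cmod a \<ge> 2 * cmod z"
      using that mult_left_mono[of 1 "cmod z" "cmod a"] by (simp add: algebra_simps)
    also have "cmod z * (2 + cmod a) \<le> cmod (z * poly p1 z)"
      using r that by (simp add: norm_mult mult_left_mono)
    also have "cmod (z * poly p1 z) - cmod a \<le> cmod (poly p z)"
      using norm_diff_ineq[of "z * poly p1 z" a] by (simp add: p add.commute)
    finally show ?thesis by simp
  qed
  then show ?thesis
    by (intro that[of "max r 1"]) (simp add: escape_radius_def)
qed

lemma escape_radius_funpow:
  assumes "escape_radius p R" "R \<le> cmod z"
  shows "2 ^ n * cmod z \<le> cmod ((poly p ^^ n) z)"
proof (induction n)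
  case (Suc n)
  have "R \<le> cmod ((poly p ^^ n) z)"
    using Suc assms mult_le_cancel_right1[of "cmod z" "2 ^ n"] by (auto simp: escape_radius_def)
  then show ?case
    using Suc assms(1) by (force simp: escape_radius_def)
qed simp

lemma julia_set_subset_cball:
  assumes R: "escape_radius p R"
  shows "julia_set p \<subseteq> cball 0 R"
proof -
  define U where "U = {z. R < cmod z}"
  have big: "R \<le> cmod ((poly p ^^ n) z)" if "z \<in> U" for n z
    using escape_radius_funpow[OF R, of z n] that R mult_le_cancel_right1[of "cmod z" "2 ^ n"]
    by (auto simp: U_def escape_radius_def)
  have nonzero: "(poly p ^^ n) z \<noteq> 0" if "z \<in> U" for n z
    using big[OF that, of n] R by (auto simp: escape_radius_def)
  (* in the chart 1/w at infinity the iterates are bounded holomorphic functions *)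
  have "U \<subseteq> fatou_set p"
  proof (rule subset_fatou_setI[where h = "\<lambda>n z. 1 / (poly p ^^ n) z" and M = 1])
    show "open U"
      unfolding U_def by (intro open_Collect_less continuous_intros)
    show "(\<lambda>z. 1 / (poly p ^^ n) z) holomorphic_on U" for n
      using nonzero by (intro holomorphic_intros holomorphic_on_funpow_poly) auto
    show "cmod (1 / (poly p ^^ n) z) \<le> 1" if "z \<in> U" for n z
      using big[OF that, of n] R by (simp add: norm_divide divide_le_eq escape_radius_def)
    show "chordal_dist ((poly p ^^ n) z) ((poly p ^^ n) w)
        \<le> 2 * cmod (1 / (poly p ^^ n) z - 1 / (poly p ^^ n) w)" if "z \<in> U" "w \<in> U" for n z w
      using chordal_dist_inverse[of "1 / (poly p ^^ n) z" "1 / (poly p ^^ n) w"] nonzero that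
        chordal_dist_le by simp
  qed
  then show ?thesis
    unfolding julia_set_def U_def by (force simp: not_less)
qed

lemma not_in_fatou_set_if_escape_nearby:
  assumes R: "escape_radius p R"
    and bounded: "\<And>n. cmod ((poly p ^^ n) w) \<le> R"
    and escape: "\<And>e. e > 0 \<Longrightarrow> \<exists>z n. dist w z < e \<and> R < cmod ((poly p ^^ n) z)"
  shows "w \<notin> fatou_set p"
proof
  assume "w \<in> fatou_set p"
  then obtain U where U: "open U" "iterates_equicontinuous_on U (poly p)" "w \<in> U"
    unfolding fatou_set_def by blast
  have "1 / (1 + R) > 0"
    using R by (simp add: escape_radius_def)
  then obtain \<delta> where "\<delta> > 0" and \<delta>: "\<And>n z. z \<in> U \<Longrightarrow> dist z w < \<delta> \<Longrightarrow>
      chordal_dist ((poly p ^^ n) z) ((poly p ^^ n) w) < 1 / (1 + R)"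
    using U unfolding iterates_equicontinuous_on_def by meson
  obtain e where "e > 0" "ball w e \<subseteq> U"
    using U open_contains_ball by blast
  then obtain z n where z: "dist w z < min \<delta> e" and n: "R < cmod ((poly p ^^ n) z)"
    using escape[of "min \<delta> e"] \<open>\<delta> > 0\<close> by auto
  (* two more steps push the orbit of z far away from the bounded orbit of w *)
  have "2 * R + 1 \<le> cmod ((poly p ^^ 2) ((poly p ^^ n) z))"
    using escape_radius_funpow[OF R, of "(poly p ^^ n) z" 2] n R
    by (simp add: escape_radius_def)
  moreover have "(poly p ^^ (2 + n)) z = (poly p ^^ 2) ((poly p ^^ n) z)"
    by (simp only: funpow_add comp_def)
  ultimately have "1 / (1 + R) \<le> chordal_dist ((poly p ^^ (2 + n)) z) ((poly p ^^ (2 + n)) w)"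
    using R by (intro chordal_dist_ge[OF _ bounded]) (auto simp: escape_radius_def)
  moreover have "z \<in> U" "dist z w < \<delta>"
    using z \<open>ball w e \<subseteq> U\<close> by (auto simp: dist_commute)
  ultimately show False
    using \<delta>[of z "2 + n"] by linarith
qed

lemma frontier_bounded_orbits_subset_julia_set:
  assumes R: "escape_radius p R"
  shows "frontier {z. \<forall>n. cmod ((poly p ^^ n) z) \<le> R} \<subseteq> julia_set p"
proof
  define K where "K = {z. \<forall>n. cmod ((poly p ^^ n) z) \<le> R}"
  have "K = (\<Inter>n. {z. cmod ((poly p ^^ n) z) \<le> R})"
    by (auto simp: K_def)
  then have "closed K"
    by (auto intro!: closed_Collect_le continuous_intros holomorphic_on_imp_continuous_on
        holomorphic_on_funpow_poly)
  fix w assume "w \<in> frontier {z. \<forall>n. cmod ((poly p ^^ n) z) \<le> R}"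
  then have "w \<in> K" and "\<And>e. e > 0 \<Longrightarrow> \<exists>z. z \<notin> K \<and> dist w z < e"
    using frontier_subset_closed[OF \<open>closed K\<close>] by (auto simp: K_def[symmetric] frontier_straddle)
  then have "w \<notin> fatou_set p"
    by (intro not_in_fatou_set_if_escape_nearby[OF R]) (auto simp: K_def not_le, meson)
  then show "w \<in> julia_set p"
    by (simp add: julia_set_def)
qed

lemma julia_set_nonempty:
  assumes "degree p \<ge> 2"
  shows "julia_set p \<noteq> {}"
proof -
  obtain R where R: "escape_radius p R"
    using escape_radius_exists[OF assms] .
  define K where "K = {z. \<forall>n. cmod ((poly p ^^ n) z) \<le> R}"
  have "degree (p + [:0, -1:]) = degree p"
    using assms by (intro degree_add_eq_left) auto
  then obtain z0 where "poly (p + [:0, -1:]) z0 = 0"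
    using assms alg_closed_imp_poly_has_root[of "p + [:0, -1:]"] by auto
  then have fixed: "poly p z0 = z0"
    by simp
  have "cmod z0 \<le> R"
  proof (rule ccontr)
    assume "\<not> cmod z0 \<le> R"
    with R have "2 * cmod z0 \<le> cmod (poly p z0)"
      by (simp add: escape_radius_def)
    with fixed \<open>\<not> cmod z0 \<le> R\<close> R show False
      by (simp add: escape_radius_def)
  qed
  moreover have "(poly p ^^ n) z0 = z0" for n
    using fixed by (induction n) auto
  ultimately have "z0 \<in> K"
    by (simp add: K_def)
  moreover have "K \<noteq> UNIV"
  proof -
    have "K \<subseteq> cball 0 R"
      unfolding K_def by (auto dest: spec[of _ 0])
    then show ?thesis
      using bounded_cball bounded_subset not_bounded_UNIV by metis
  qed
  ultimately have "frontier K \<noteq> {}"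
    using frontier_not_empty[of K] by blast
  then show ?thesis
    using frontier_bounded_orbits_subset_julia_set[OF R] by (auto simp: K_def)
qed

section \<open>Affine normalisation\<close>

lemma compact_convex_empty_interior_imp_segment:
  fixes K :: "'a::euclidean_space set"
  assumes "DIM('a) = 2" "compact K" "convex K" "K \<noteq> {}" "interior K = {}"
  obtains u v where "K = closed_segment u v"
proof -
  have "aff_dim K \<noteq> int DIM('a)"
    using interior_rel_interior[of K] rel_interior_eq_empty[OF assms(3)] assms(4,5) by auto
  then have "collinear K"
    using aff_dim_le_DIM[of K] assms(1) by (simp add: collinear_aff_dim)
  then show ?thesis
    using compact_convex_collinear_segment assms(2-4) that by blast
qed

lemma closed_segment_affine_image:
  fixes a b u v :: "'a::real_normed_algebra"
  shows "closed_segment (a * u + b) (a * v + b) = (\<lambda>y. a * y + b) ` closed_segment u v"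
  using closed_segment_translation[of b "a * u" "a * v"] closed_segment_linear_image[of "\<lambda>y. a * y" u v]
  by (simp add: image_image add.commute)

lemma segment_affine_normalisation:
  fixes u v :: complex
  assumes "u \<noteq> v"
  obtains a b where "a \<noteq> 0" "\<And>y. a * y + b \<in> closed_segment (-1) 1 \<longleftrightarrow> y \<in> closed_segment u v"
proof
  define a where "a = 2 / (v - u)"
  define b where "b = - (u + v) / (v - u)"
  show "a \<noteq> 0"
    using assms by (simp add: a_def)
  have "v - u \<noteq> 0"
    using assms by simp
  then have "a * u + b = -1" "a * v + b = 1"
    by (simp_all add: a_def b_def divide_simps)
  then have "closed_segment (-1) 1 = (\<lambda>y. a * y + b) ` closed_segment u v"
    by (metis closed_segment_affine_image)
  moreover have "inj (\<lambda>y. a * y + b)"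
    using \<open>a \<noteq> 0\<close> by (auto intro: injI)
  ultimately show "a * y + b \<in> closed_segment (-1) 1 \<longleftrightarrow> y \<in> closed_segment u v" for y
    using inj_image_mem_iff[of "\<lambda>y. a * y + b" y] by simp
qed

lemma affine_conjugate_poly:
  fixes p :: "complex poly"
  assumes "a \<noteq> 0" "degree p \<ge> 1"
  obtains q where "degree q = degree p" "\<And>w. poly q w = a * poly p ((w - b) / a) + b"
proof
  define q where "q = smult a (p \<circ>\<^sub>p [:-b / a, 1 / a:]) + [:b:]"
  show "poly q w = a * poly p ((w - b) / a) + b" for w
    using assms by (simp add: q_def poly_pcompose field_simps)
  have "degree (smult a (p \<circ>\<^sub>p [:-b / a, 1 / a:])) = degree p"
    using assms by (simp add: degree_pcompose)
  then show "degree q = degree p"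
    unfolding q_def using assms(2) by (subst degree_add_eq_left) auto
qed

lemma julia_set_eq_segment:
  fixes p :: "complex poly"
  assumes "degree p \<ge> 2" "convex (julia_set p)"
    and pre: "\<And>z. poly p z \<in> julia_set p \<longleftrightarrow> z \<in> julia_set p"
  obtains u v where "u \<noteq> v" "julia_set p = closed_segment u v"
proof -
  obtain R where R: "escape_radius p R"
    using escape_radius_exists assms(1) by blast
  have "compact (julia_set p)"
    using julia_set_closed julia_set_subset_cball[OF R]
    by (metis bounded_cball bounded_subset compact_eq_bounded_closed)
  moreover have "interior (julia_set p) = {}"
    using interior_subset_fatou_set_if_invariant[of "julia_set p" p R] pre
      julia_set_subset_cball[OF R] interior_subset[of "julia_set p"]
    by (auto simp: julia_set_def)
  moreover have "julia_set p \<noteq> {}"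
    using julia_set_nonempty assms(1) .
  ultimately obtain u v where J: "julia_set p = closed_segment u v"
    using compact_convex_empty_interior_imp_segment[of "julia_set p"] assms(2) by auto
  have "u \<noteq> v"
  proof
    assume "u = v"
    then obtain t where "\<And>z. poly p z = u + (z - u)\<^sup>2 * poly t z"
      using double_root_if_unique_preimage[of p u] pre assms(1) by (auto simp: J)
    then have "u \<in> fatou_set p"
      by (rule superattracting_fixed_point_in_fatou_set)
    moreover have "u \<in> julia_set p"
      by (simp add: J)
    ultimately show False
      by (simp add: julia_set_def)
  qed
  then show ?thesis
    using J by (rule that)
qed

theorem mainTheorem6:
  fixes p :: "complex poly" and d :: nat
  assumes "degree p = d" and "d \<ge> 2"
    and "convex hull (julia_set p) = {z. poly p z \<in> convex hull (julia_set p)}"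
    and "{z. poly p z \<in> convex hull (julia_set p)} = julia_set p"
  shows "\<exists>a b :: complex. a \<noteq> 0 \<and>
           (is_chebyshev d (\<lambda>w. a * poly p ((w - b) / a) + b) \<or>
            is_chebyshev d (\<lambda>w. - (a * poly p ((w - b) / a) + b)))"
proof -
  have "convex (julia_set p)" and pre: "\<And>z. poly p z \<in> julia_set p \<longleftrightarrow> z \<in> julia_set p"
    using assms(3,4) convex_convex_hull[of "julia_set p"] by auto
  moreover have "degree p \<ge> 2"
    using assms(1,2) by simp
  ultimately obtain u v where "u \<noteq> v" and J: "julia_set p = closed_segment u v"
    using julia_set_eq_segment by blast
  then obtain a b :: complex where "a \<noteq> 0"
    and ab: "\<And>y. a * y + b \<in> closed_segment (-1) 1 \<longleftrightarrow> y \<in> julia_set p"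
    using segment_affine_normalisation[OF \<open>u \<noteq> v\<close>] unfolding J by blast
  obtain q where "degree q = d" and q: "\<And>w. poly q w = a * poly p ((w - b) / a) + b"
    using affine_conjugate_poly[OF \<open>a \<noteq> 0\<close>] assms(1,2) by (metis one_le_numeral order_trans)
  have "poly q w \<in> closed_segment (-1) 1 \<longleftrightarrow> w \<in> closed_segment (-1) 1" for w
    using ab[of "poly p ((w - b) / a)"] pre[of "(w - b) / a"] ab[of "(w - b) / a"] \<open>a \<noteq> 0\<close>
    by (simp add: q)
  then have "q = cheb d \<or> q = - cheb d"
    using eq_cheb_if_vimage_interval[OF \<open>degree q = d\<close>] assms(2) by simp
  moreover have "(\<lambda>w. a * poly p ((w - b) / a) + b) = poly q"
    by (simp add: q fun_eq_iff)
  ultimately have "is_chebyshev d (\<lambda>w. a * poly p ((w - b) / a) + b) \<or>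
      is_chebyshev d (\<lambda>w. - (a * poly p ((w - b) / a) + b))"
    using is_chebyshev_cheb[of d] by (auto simp: fun_eq_iff)
  with \<open>a \<noteq> 0\<close> show ?thesis
    by blast
qed

end
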